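(* Let $p \ge 2$ and $n \ge 1$ be integers. Let $\mathcal{C}_\bullet, \widetilde{\mathcal{C}} \in \mathbb{R}^{\otimes^p n}_{\mathrm{sym}}$, let $W \in \mathbb{R}^{n\times n}$ be nonsingular, let $s \in \mathbb{R}^n$ be nonzero, and set $v = W^{-T}W^{-1}s$. Then the following four descriptions all determine one and the same tensor $\mathcal{C}_+ \in \mathbb{R}^{\otimes^p n}_{\mathrm{sym}}$, and it is unique: (a) $\mathcal{C}_+$ is the unique minimizer of $\|(\mathcal{C}-\mathcal{C}_\bullet)[W]^p\|_F$ over all $\mathcal{C} \in \mathbb{R}^{\otimes^p n}_{\mathrm{sym}}$ subject to $\mathcal{C}[s] = \widetilde{\mathcal{C}}[s]$; (b) $\mathcal{C}_+ = \mathcal{C}_\bullet + \sum_{j=1}^p (-1)^{j+1}\binom{p}{j} (v^T s)^{-j}\, P_{\mathrm{sym}}\big( (\otimes^j v) \otimes (\widetilde{\mathcal{C}}-\mathcal{C}_\bullet)[s]^j \big)$; (c) $\mathcal{C}_+ = \mathcal{C}_\bullet + P_{\mathrm{sym}}(\mathcal{A}\otimes v)$, where $\mathcal{A}$ is the unique tensor in $\mathbb{R}^{\otimes^{p-1} n}_{\mathrm{sym}}$ satisfying $P_{\mathrm{sym}}(\mathcal{A}\otimes v)[s] = (\widetilde{\mathcal{C}}-\mathcal{C}_\bullet)[s]$; (d) $(\mathcal{C}_+ - \widetilde{\mathcal{C}})[W]^p = (\mathcal{C}_\bullet - \widetilde{\mathcal{C}})[W]^p\left[ I - \frac{W^{-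1}ss^TW^{-T}}{s^TW^{-T}W^{-1}s}\right]^p$.
   Context: A $p$-tensor $\mathcal{T} \in \mathbb{R}^{\otimes^p n}$ is a multilinear map $(\mathbb{R}^n)^p \to \mathbb{R}$. For $q \le p$ vectors, $\mathcal{T}[s_1,\dots,s_q]$ is the $(p-q)$-tensor obtained by fixing the first $q$ arguments; $\mathcal{T}[s]^q$ means $\mathcal{T}[s,\dots,s]$ ($q$ times), and $\mathcal{T}[s]$ means $\mathcal{T}[s]^1$. For matrices, $(\mathcal{T}[M_1,\dots,M_p])[s_1,\dots,s_p] = \mathcal{T}[M_1s_1,\dots,M_ps_p]$, and $\mathcal{T}[M]^p = \mathcal{T}[M,\dots,M]$. The outer product is $(\mathcal{T}_1\otimes\mathcal{T}_2)[s_1,\dots,s_{p_1+p_2}] = \mathcal{T}_1[s_1,\dots,s_{p_1}]\,\mathcal{T}_2[s_{p_1+1},\dots,s_{p_1+p_2}]$ (a $0$-tensor is a scalar), vectors are regarded as 1-tensors via $v[s]=v^Ts$, and $\otimes^j v = v\otimes\cdots\otimes v$ ($j$ factors). For $\sigma$ in the symmetric group $S_p$, $\sigma(\mathcal{T})[s_1,\dots,s_p]=\mathcal{T}[s_{\sigma(1)},\dots,s_{\sigma(p)}]$; $\mathcal{T}$ is symmetric if $\sigma(\mathcal{T})=\mathcal{T}$ for all $\sigma$, $\mathbb{R}^{\otimes^p n}_{\mathrm{sym}}$ is the space of symmetric $p$-tensors, and $P_{\mathrm{sym}}(\mathcal{T}) = \frac{1}{p!}\sum_{\sigma\in S_p}\sigma(\mathcal{T})$.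 $\|\cdot\|_F$ is the Frobenius norm of the array of entries $\mathcal{T}[e_{i_1},\dots,e_{i_p}]$. *)

theory Defs
  imports "HOL-Analysis.Analysis" "HOL-Combinatorics.Permutations"
begin

text \<open>A p-tensor on R^n (n = CARD('n)) is represented by its array of entries
  T[e_i1,...,e_ip], i.e. a function on index lists of length p; it is required
  to vanish on index lists of any other length.\<close>

type_synonym 'n tensor = "'n list \<Rightarrow> real"

definition is_tensor :: "nat \<Rightarrow> 'n tensor \<Rightarrow> bool" where
  "is_tensor p T \<longleftrightarrow> (\<forall>xs. length xs \<noteq> p \<longrightarrow> T xs = 0)"

definition perm_tensor :: "(nat \<Rightarrow> nat) \<Rightarrow> 'n tensor \<Rightarrow> 'n tensor" where
  "perm_tensor \<sigma> T = (\<lambda>xs. T (permute_list \<sigma> xs))"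

definition sym_tensor :: "nat \<Rightarrow> 'n tensor \<Rightarrow> bool" where
  "sym_tensor p T \<longleftrightarrow> is_tensor p T \<and>
     (\<forall>\<sigma>. \<sigma> permutes {..<p} \<longrightarrow> perm_tensor \<sigma> T = T)"

definition Psym :: "nat \<Rightarrow> 'n tensor \<Rightarrow> 'n tensor" where
  "Psym p T = (\<lambda>xs. if length xs = p then
      (1 / fact p) * (\<Sum>\<sigma>\<in>{\<sigma>. \<sigma> permutes {..<p}}. perm_tensor \<sigma> T xs) else 0)"

definition contr :: "'n tensor \<Rightarrow> real ^ 'n \<Rightarrow> 'n tensor" where
  "contr T s = (\<lambda>xs. \<Sum>i\<in>UNIV. s $ i * T (i # xs))"

definition contr_pow :: "'n tensor \<Rightarrow> real ^ 'n \<Rightarrow> nat \<Rightarrow> 'n tensor" where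
  "contr_pow T s q = ((\<lambda>U. contr U s) ^^ q) T"

definition outer :: "nat \<Rightarrow> 'n tensor \<Rightarrow> 'n tensor \<Rightarrow> 'n tensor" where
  "outer p1 T1 T2 = (\<lambda>xs. T1 (take p1 xs) * T2 (drop p1 xs))"

definition vec_tensor :: "real ^ 'n \<Rightarrow> 'n tensor" where
  "vec_tensor v = (\<lambda>xs. if length xs = 1 then v $ (hd xs) else 0)"

definition tensor_power :: "nat \<Rightarrow> real ^ 'n \<Rightarrow> 'n tensor" where
  "tensor_power j v = (\<lambda>xs. if length xs = j then (\<Prod>k<j. v $ (xs ! k)) else 0)"

definition tensor_mat :: "nat \<Rightarrow> 'n tensor \<Rightarrow> real ^ 'n ^ 'n \<Rightarrow> 'n tensor" where
  "tensor_mat p T M = (\<lambda>xs. if length xs = p then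
      (\<Sum>ys\<in>{ys::'n list. length ys = p}. T ys * (\<Prod>k<p. M $ (ys ! k) $ (xs ! k))) else 0)"

definition frob_norm :: "nat \<Rightarrow> 'n tensor \<Rightarrow> real" where
  "frob_norm p T = sqrt (\<Sum>xs\<in>{xs::'n list. length xs = p}. (T xs)\<^sup>2)"

definition tadd :: "'n tensor \<Rightarrow> 'n tensor \<Rightarrow> 'n tensor" where
  "tadd A B = (\<lambda>xs. A xs + B xs)"

definition tsub :: "'n tensor \<Rightarrow> 'n tensor \<Rightarrow> 'n tensor" where
  "tsub A B = (\<lambda>xs. A xs - B xs)"

definition tscale :: "real \<Rightarrow> 'n tensor \<Rightarrow> 'n tensor" where
  "tscale c A = (\<lambda>xs. c * A xs)"

definition tsum :: "('i \<Rightarrow> 'n tensor) \<Rightarrow> 'i set \<Rightarrow> 'n tensor" where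
  "tsum F I = (\<lambda>xs. \<Sum>i\<in>I. F i xs)"

end

theory Submission
  imports Defs
begin

text \<open>Put \<open>u = W\<^sup>-\<^sup>1 s\<close> and \<open>v = W\<^sup>-\<^sup>T u\<close>, so that \<open>v\<^sup>T s = |u|\<^sup>2 > 0\<close>, and let
  \<open>Q = I - s v\<^sup>T / v\<^sup>T s\<close> be the projection onto \<open>v\<^sup>\<bottom>\<close> along \<open>s\<close>. The tensor
  \<open>C\<^sub>+ = C\<^sub>~ + (C\<^sub>\<bullet> - C\<^sub>~)[Q]\<^sup>p\<close> satisfies the secant condition because \<open>Q s = 0\<close>, and (d) holds
  because \<open>W (I - u u\<^sup>T / |u|\<^sup>2) = Q W\<close>.

  A symmetric tensor is determined by its diagonal \<open>x \<mapsto> T[x]\<^sup>p\<close> (polarization). Expanding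
  \<open>(C\<^sub>\<bullet> - C\<^sub>~)[x - (v\<^sup>T x / v\<^sup>T s) s]\<^sup>p\<close> binomially gives (b) on the diagonal, and also
  \<open>C\<^sub>+ - C\<^sub>\<bullet> = P\<^sub>s\<^sub>y\<^sub>m(A \<otimes> v)\<close> for an explicit symmetric \<open>A\<close>, which is (c). This \<open>A\<close> is unique:
  if \<open>P\<^sub>s\<^sub>y\<^sub>m(A \<otimes> v)[s] = 0\<close>, the polynomial \<open>x \<mapsto> A[x]\<^sup>p\<^sup>-\<^sup>1 v\<^sup>T x\<close> is invariant under shifts
  along \<open>s\<close>, hence vanishes, and then so does \<open>A\<close>.

  Finally \<open>(C\<^sub>+ - C\<^sub>\<bullet>)[W]\<^sup>p = P\<^sub>s\<^sub>y\<^sub>m(A[W] \<otimes> u)\<close> is Frobenius-orthogonal to \<open>(C - C\<^sub>+)[W]\<^sup>p\<close> for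
  every admissible \<open>C\<close>, because the latter vanishes when contracted with \<open>u\<close>; Pythagoras
  gives (a).\<close>

section \<open>Multilinear evaluation\<close>

text \<open>\<open>teval T [x\<^sub>1, \<dots>, x\<^sub>k]\<close> is the paper's \<open>T[x\<^sub>1, \<dots>, x\<^sub>k]\<close>; it only reads the
  entries of \<open>T\<close> at index lists of length \<open>k\<close>.\<close>

fun teval :: "'n::finite tensor \<Rightarrow> (real^'n) list \<Rightarrow> real" where
  "teval T [] = T []"
| "teval T (x # xs) = (\<Sum>i\<in>UNIV. x $ i * teval (\<lambda>ys. T (i # ys)) xs)"

lemma teval_cong:
  "(\<And>ys. length ys = length xs \<Longrightarrow> T ys = T' ys) \<Longrightarrow> teval T xs = teval T' xs"
proof (induction xs arbitrary: T T')
  case (Cons x xs)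
  have "teval (\<lambda>ys. T (i # ys)) xs = teval (\<lambda>ys. T' (i # ys)) xs" for i
    by (rule Cons.IH) (simp add: Cons.prems)
  then show ?case by simp
qed simp

lemma teval_sum: "finite J \<Longrightarrow> teval (\<lambda>ys. \<Sum>j\<in>J. F j ys) xs = (\<Sum>j\<in>J. teval (F j) xs)"
proof (induction xs arbitrary: F)
  case (Cons x xs)
  have "teval (\<lambda>ys. \<Sum>j\<in>J. F j (i # ys)) xs = (\<Sum>j\<in>J. teval (\<lambda>ys. F j (i # ys)) xs)" for i
    using Cons.IH[OF Cons.prems, of "\<lambda>j ys. F j (i # ys)"] by simp
  then show ?case by (simp add: sum_distrib_left sum.swap[of _ J])
qed simp

lemma teval_mult: "teval (\<lambda>ys. a * T ys) xs = a * teval T xs"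
  by (induction xs arbitrary: T) (simp_all add: sum_distrib_left algebra_simps)

lemma teval_add: "teval (\<lambda>ys. T ys + T' ys) xs = teval T xs + teval T' xs"
  by (induction xs arbitrary: T T') (simp_all add: sum.distrib algebra_simps)

lemma teval_diff: "teval (\<lambda>ys. T ys - T' ys) xs = teval T xs - teval T' xs"
  by (induction xs arbitrary: T T') (simp_all add: right_diff_distrib sum_subtractf)

lemma teval_zero: "teval (\<lambda>_. 0) xs = 0"
  by (induction xs) simp_all

lemma teval_tadd: "teval (tadd A B) xs = teval A xs + teval B xs"
  unfolding tadd_def by (rule teval_add)

lemma teval_tsub: "teval (tsub A B) xs = teval A xs - teval B xs"
  unfolding tsub_def by (rule teval_diff)

lemma teval_tscale: "teval (tscale c A) xs = c * teval A xs"
  unfolding tscale_def by (rule teval_mult)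

lemma teval_tsum: "finite I \<Longrightarrow> teval (tsum F I) xs = (\<Sum>i\<in>I. teval (F i) xs)"
  unfolding tsum_def by (rule teval_sum)

lemma teval_Cons_add: "teval T ((x + y) # xs) = teval T (x # xs) + teval T (y # xs)"
  by (simp add: sum.distrib algebra_simps)

lemma teval_Cons_scaleR: "teval T ((a *\<^sub>R x) # xs) = a * teval T (x # xs)"
  by (simp add: sum_distrib_left algebra_simps)

lemma finite_lists_length: "finite {zs :: 'a::finite list. length zs = n}"
  using finite_lists_length_eq[of "UNIV :: 'a set" n] by simp

lemma sum_lists_length_Suc:
  "(\<Sum>zs\<in>{zs::'a::finite list. length zs = Suc n}. F zs) =
   (\<Sum>i\<in>UNIV. \<Sum>zs\<in>{zs. length zs = n}. F (i # zs))"
proof -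
  have "{zs::'a list. length zs = Suc n} = (\<lambda>(i, zs). i # zs) ` (UNIV \<times> {zs. length zs = n})"
    by (auto simp: length_Suc_conv image_iff)
  moreover have "inj_on (\<lambda>(i, zs). i # zs) (UNIV \<times> {zs::'a list. length zs = n})"
    by (auto simp: inj_on_def)
  ultimately show ?thesis
    by (simp add: sum.reindex sum.cartesian_product finite_lists_length split_def)
qed

lemma teval_eq_sum:
  "teval T xs = (\<Sum>ys\<in>{ys. length ys = length xs}. T ys * (\<Prod>k<length xs. xs ! k $ (ys ! k)))"
  by (induction xs arbitrary: T)
    (simp_all add: sum_lists_length_Suc prod.lessThan_Suc_shift sum_distrib_left algebra_simps
      del: prod.lessThan_Suc)

lemma teval_axis: "teval T (map (\<lambda>i. axis i 1) ys) = T ys"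
proof (induction ys arbitrary: T)
  case (Cons y ys)
  have "(\<Sum>i\<in>UNIV. axis y 1 $ i * teval (\<lambda>zs. T (i # zs)) (map (\<lambda>i. axis i 1) ys)) =
        (\<Sum>i\<in>UNIV. if i = y then T (i # ys) else 0)"
    by (rule sum.cong) (simp, subst Cons.IH, simp add: axis_def)
  then show ?case by simp
qed simp

lemma tensor_eqI:
  assumes "is_tensor p A" "is_tensor p B" "\<And>xs. length xs = p \<Longrightarrow> teval A xs = teval B xs"
  shows "A = B"
proof
  fix ys :: "'a list"
  show "A ys = B ys"
    using assms(1,2) assms(3)[of "map (\<lambda>i. axis i 1) ys"]
    by (cases "length ys = p") (simp_all add: teval_axis is_tensor_def)
qed

lemma teval_contr: "teval (contr T s) xs = teval T (s # xs)"
  unfolding contr_def by (simp add: teval_sum teval_mult)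

lemma teval_contr_pow: "teval (contr_pow T s j) xs = teval T (replicate j s @ xs)"
proof (induction j arbitrary: xs)
  case (Suc j)
  have "teval (contr_pow T s (Suc j)) xs = teval (contr_pow T s j) (s # xs)"
    by (simp add: contr_pow_def teval_contr del: teval.simps)
  also have "\<dots> = teval T (replicate j s @ s # xs)"
    by (rule Suc.IH)
  also have "replicate j s @ s # xs = replicate (Suc j) s @ xs"
    by (simp add: replicate_append_same[symmetric])
  finally show ?case .
qed (simp add: contr_pow_def)

lemma teval_outer:
  "j \<le> length xs \<Longrightarrow> teval (outer j T1 T2) xs = teval T1 (take j xs) * teval T2 (drop j xs)"
proof (induction j arbitrary: T1 xs)
  case 0
  have "outer 0 T1 T2 = (\<lambda>zs. T1 [] * T2 zs)" by (simp add: outer_def)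
  then show ?case by (simp add: teval_mult)
next
  case (Suc j)
  then obtain x xs' where xs: "xs = x # xs'" by (cases xs) auto
  have "(\<lambda>ys. outer (Suc j) T1 T2 (i # ys)) = outer j (\<lambda>ys. T1 (i # ys)) T2" for i
    by (simp add: outer_def fun_eq_iff)
  with Suc show ?case
    by (simp add: xs sum_distrib_left sum_distrib_right mult_ac)
qed

lemma teval_outer_replicate:
  "j \<le> p \<Longrightarrow> teval (outer j T1 T2) (replicate p x) =
     teval T1 (replicate j x) * teval T2 (replicate (p - j) x)"
  by (simp add: teval_outer take_replicate min_def)

lemma teval_tensor_power: "teval (tensor_power j v) (replicate j x) = (v \<bullet> x) ^ j"
proof (induction j)
  case (Suc j)
  have "(\<lambda>ys. tensor_power (Suc j) v (i # ys)) = (\<lambda>ys. v $ i * tensor_power j v ys)" for i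
    by (simp add: tensor_power_def fun_eq_iff prod.lessThan_Suc_shift del: prod.lessThan_Suc)
  then show ?case
    by (simp add: teval_mult Suc inner_vec_def sum_distrib_right algebra_simps)
qed (simp add: tensor_power_def)

lemma teval_vec_tensor: "teval (vec_tensor v) [x] = v \<bullet> x"
  by (simp add: vec_tensor_def inner_vec_def algebra_simps)

lemma sum_lists_length_permute:
  assumes "\<sigma> permutes {..<n}"
  shows "(\<Sum>ys\<in>{ys::'a list. length ys = n}. F (permute_list \<sigma> ys)) =
         (\<Sum>ys\<in>{ys. length ys = n}. F ys)"
proof (rule sum.reindex_bij_witness[of _ "permute_list (inv \<sigma>)" "permute_list \<sigma>"])
  fix ys :: "'a list" assume "ys \<in> {ys. length ys = n}"
  then show "permute_list (inv \<sigma>) (permute_list \<sigma> ys) = ys"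
    and "permute_list \<sigma> (permute_list (inv \<sigma>) ys) = ys"
    using assms permutes_inv[OF assms]
    by (simp_all add: permute_list_compose[symmetric] permutes_inv_o permute_list_id)
qed simp_all

lemma teval_perm_tensor:
  assumes "\<sigma> permutes {..<length xs}"
  shows "teval (perm_tensor \<sigma> T) xs = teval T (permute_list \<sigma> xs)"
proof -
  let ?L = "{ys::'a list. length ys = length xs}"
  have prod_perm: "(\<Prod>k<length xs. permute_list \<sigma> xs ! k $ (permute_list \<sigma> ys ! k)) =
      (\<Prod>k<length xs. xs ! k $ (ys ! k))" if "ys \<in> ?L" for ys
  proof -
    have "(\<Prod>k<length xs. permute_list \<sigma> xs ! k $ (permute_list \<sigma> ys ! k)) =
        (\<Prod>k<length xs. xs ! (\<sigma> k) $ (ys ! (\<sigma> k)))"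
      using that by (intro prod.cong) (simp_all add: permute_list_nth assms)
    also have "\<dots> = (\<Prod>k<length xs. xs ! k $ (ys ! k))"
      using prod.permute[OF assms, of "\<lambda>k. xs ! k $ (ys ! k)"] by (simp add: comp_def)
    finally show ?thesis .
  qed
  have "teval T (permute_list \<sigma> xs) = (\<Sum>ys\<in>?L. T ys * (\<Prod>k<length xs. permute_list \<sigma> xs ! k $ (ys ! k)))"
    by (simp add: teval_eq_sum)
  also have "\<dots> = (\<Sum>ys\<in>?L. T (permute_list \<sigma> ys) *
      (\<Prod>k<length xs. permute_list \<sigma> xs ! k $ (permute_list \<sigma> ys ! k)))"
    by (rule sum_lists_length_permute[OF assms, symmetric])
  also have "\<dots> = teval (perm_tensor \<sigma> T) xs"
    by (simp add: teval_eq_sum perm_tensor_def prod_perm)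
  finally show ?thesis by simp
qed

lemma teval_map_linear:
  "teval (\<lambda>ys. teval T (map g ys)) xs = teval T (map (\<lambda>x. \<Sum>y\<in>UNIV. x $ y *\<^sub>R g y) xs)"
proof (induction xs arbitrary: T)
  case (Cons x xs)
  let ?h = "\<lambda>x. \<Sum>y\<in>UNIV. x $ y *\<^sub>R g y"
  have "teval (\<lambda>ys. teval T (map g ys)) (x # xs) =
     (\<Sum>i\<in>UNIV. x $ i * teval (\<lambda>ys. \<Sum>j\<in>UNIV. g i $ j * teval (\<lambda>zs. T (j # zs)) (map g ys)) xs)"
    by simp
  also have "\<dots> = (\<Sum>i\<in>UNIV. x $ i * (\<Sum>j\<in>UNIV. g i $ j * teval (\<lambda>zs. T (j # zs)) (map ?h xs)))"
    by (simp add: teval_sum teval_mult Cons.IH)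
  also have "\<dots> = (\<Sum>i\<in>UNIV. \<Sum>j\<in>UNIV. x $ i * (g i $ j * teval (\<lambda>zs. T (j # zs)) (map ?h xs)))"
    by (simp add: sum_distrib_left)
  also have "\<dots> = (\<Sum>j\<in>UNIV. \<Sum>i\<in>UNIV. x $ i * (g i $ j * teval (\<lambda>zs. T (j # zs)) (map ?h xs)))"
    by (rule sum.swap)
  also have "\<dots> = (\<Sum>j\<in>UNIV. ?h x $ j * teval (\<lambda>zs. T (j # zs)) (map ?h xs))"
    by (simp add: sum_distrib_right mult_ac)
  also have "\<dots> = teval T (map ?h (x # xs))" by simp
  finally show ?case .
qed simp

lemma teval_tensor_mat:
  assumes "length xs = p"
  shows "teval (tensor_mat p T M) xs = teval T (map ((*v) M) xs)"
proof -
  have "teval (tensor_mat p T M) xs = teval (\<lambda>ys. teval T (map (\<lambda>y. column y M) ys)) xs"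
    by (rule teval_cong) (simp add: tensor_mat_def teval_eq_sum column_def assms)
  also have "\<dots> = teval T (map (\<lambda>x. \<Sum>y\<in>UNIV. x $ y *\<^sub>R column y M) xs)"
    by (rule teval_map_linear)
  also have "(\<lambda>x. \<Sum>y\<in>UNIV. x $ y *\<^sub>R column y M) = (*v) M"
    by (auto simp: fun_eq_iff matrix_mult_sum scalar_mult_eq_scaleR)
  finally show ?thesis .
qed

section \<open>Symmetric tensors\<close>

lemma sym_tensor_is_tensor: "sym_tensor p T \<Longrightarrow> is_tensor p T"
  by (simp add: sym_tensor_def)

lemma sym_tensor_teval_mset:
  assumes "sym_tensor p T" "length xs = p" "mset xs = mset ys"
  shows "teval T xs = teval T ys"
proof -
  obtain \<sigma> where \<sigma>: "\<sigma> permutes {..<length ys}" "permute_list \<sigma> ys = xs"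
    using mset_eq_permutation[OF assms(3)] by blast
  have "length ys = p" using assms(2,3) by (metis mset_eq_length)
  then have "perm_tensor \<sigma> T = T" using assms(1) \<sigma>(1) by (simp add: sym_tensor_def)
  then show ?thesis using teval_perm_tensor[OF \<sigma>(1), of T] \<sigma>(2) by simp
qed

lemma sym_tensorI_teval:
  assumes "is_tensor p T"
    and "\<And>xs ys. length xs = p \<Longrightarrow> mset xs = mset ys \<Longrightarrow> teval T xs = teval T ys"
  shows "sym_tensor p T"
  unfolding sym_tensor_def
proof (intro conjI allI impI ext)
  fix \<sigma> and ys :: "'a list" assume \<sigma>: "\<sigma> permutes {..<p}"
  show "perm_tensor \<sigma> T ys = T ys"
  proof (cases "length ys = p")
    case True
    let ?e = "map (\<lambda>i. axis i 1) ys"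
    have "perm_tensor \<sigma> T ys = teval T (permute_list \<sigma> ?e)"
      using \<sigma> True by (simp add: teval_axis perm_tensor_def permute_list_map)
    also have "\<dots> = teval T ?e"
      by (rule assms(2)) (use \<sigma> True in simp_all)
    finally show ?thesis by (simp add: teval_axis)
  qed (use assms(1) in \<open>simp add: perm_tensor_def is_tensor_def\<close>)
qed fact

lemma sym_tadd: "sym_tensor p A \<Longrightarrow> sym_tensor p B \<Longrightarrow> sym_tensor p (tadd A B)"
  unfolding sym_tensor_def is_tensor_def tadd_def perm_tensor_def by (auto simp: fun_eq_iff)

lemma sym_tsub: "sym_tensor p A \<Longrightarrow> sym_tensor p B \<Longrightarrow> sym_tensor p (tsub A B)"
  unfolding sym_tensor_def is_tensor_def tsub_def perm_tensor_def by (auto simp: fun_eq_iff)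

lemma sym_tscale: "sym_tensor p A \<Longrightarrow> sym_tensor p (tscale c A)"
  unfolding sym_tensor_def is_tensor_def tscale_def perm_tensor_def by (auto simp: fun_eq_iff)

lemma sym_tsum: "(\<And>i. i \<in> I \<Longrightarrow> sym_tensor p (F i)) \<Longrightarrow> sym_tensor p (tsum F I)"
  unfolding sym_tensor_def is_tensor_def tsum_def perm_tensor_def
  by (auto simp: fun_eq_iff intro!: sum.neutral sum.cong)

lemma contr_tadd: "contr (tadd A B) s = tadd (contr A s) (contr B s)"
  by (simp add: contr_def tadd_def fun_eq_iff sum.distrib distrib_left)

lemma contr_tsub: "contr (tsub A B) s = tsub (contr A s) (contr B s)"
  by (simp add: contr_def tsub_def fun_eq_iff sum_subtractf right_diff_distrib)

lemma Psym_outer_tsub: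
  "Psym p (outer k (tsub A B) w) = tsub (Psym p (outer k A w)) (Psym p (outer k B w))"
  by (simp add: Psym_def outer_def tsub_def perm_tensor_def fun_eq_iff sum_subtractf
      left_diff_distrib right_diff_distrib)

lemma tsub_eq_zero_iff: "tsub A B = (\<lambda>_. 0) \<longleftrightarrow> A = B"
  by (auto simp: tsub_def fun_eq_iff)

lemma sym_contr:
  assumes "sym_tensor (Suc p) T"
  shows "sym_tensor p (contr T s)"
proof (rule sym_tensorI_teval)
  show "is_tensor p (contr T s)"
    using sym_tensor_is_tensor[OF assms] by (simp add: is_tensor_def contr_def)
  fix xs ys :: "(real^'a) list" assume "length xs = p" "mset xs = mset ys"
  then show "teval (contr T s) xs = teval (contr T s) ys"
    unfolding teval_contr by (intro sym_tensor_teval_mset[OF assms]) simp_all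
qed

lemma sym_tensor_mat:
  assumes "sym_tensor p T"
  shows "sym_tensor p (tensor_mat p T M)"
proof (rule sym_tensorI_teval)
  show "is_tensor p (tensor_mat p T M)" by (simp add: is_tensor_def tensor_mat_def)
  fix xs ys :: "(real^'a) list" assume xs: "length xs = p" "mset xs = mset ys"
  then have "length ys = p" by (metis mset_eq_length)
  moreover have "teval T (map ((*v) M) xs) = teval T (map ((*v) M) ys)"
    using xs by (intro sym_tensor_teval_mset[OF assms]) simp_all
  ultimately show "teval (tensor_mat p T M) xs = teval (tensor_mat p T M) ys"
    using xs by (simp add: teval_tensor_mat)
qed

lemma teval_Psym:
  assumes "length xs = p"
  shows "teval (Psym p T) xs =
    (1 / fact p) * (\<Sum>\<sigma>\<in>{\<sigma>. \<sigma> permutes {..<p}}. teval T (permute_list \<sigma> xs))"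
proof -
  have "teval (Psym p T) xs =
      teval (\<lambda>ys. (1 / fact p) * (\<Sum>\<sigma>\<in>{\<sigma>. \<sigma> permutes {..<p}}. perm_tensor \<sigma> T ys)) xs"
    by (rule teval_cong) (simp add: Psym_def assms)
  also have "\<dots> = (1 / fact p) * (\<Sum>\<sigma>\<in>{\<sigma>. \<sigma> permutes {..<p}}. teval (perm_tensor \<sigma> T) xs)"
    by (subst teval_mult, subst teval_sum) (simp_all add: finite_permutations)
  finally show ?thesis
    using assms by (simp add: teval_perm_tensor)
qed

lemma permute_list_replicate:
  assumes "\<sigma> permutes {..<n}"
  shows "permute_list \<sigma> (replicate n x) = replicate n x"
  using assms permutes_in_image[OF assms] by (intro nth_equalityI) (simp_all add: permute_list_nth)

lemma teval_Psym_replicate: "teval (Psym p T) (replicate p x) = teval T (replicate p x)"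
  by (simp add: teval_Psym permute_list_replicate card_permutations)

lemma sym_Psym: "sym_tensor p (Psym p (T :: 'n::finite tensor))"
proof (rule sym_tensorI_teval)
  show "is_tensor p (Psym p T)" by (simp add: is_tensor_def Psym_def)
  fix xs ys :: "(real^'n) list" assume xs: "length xs = p" and "mset xs = mset ys"
  then obtain \<tau> where \<tau>: "\<tau> permutes {..<p}" "ys = permute_list \<tau> xs"
    by (metis mset_eq_permutation mset_eq_length)
  let ?P = "{\<sigma>. \<sigma> permutes {..<p}}"
  have "(\<Sum>\<sigma>\<in>?P. teval T (permute_list \<sigma> ys)) = (\<Sum>\<sigma>\<in>?P. teval T (permute_list (\<tau> \<circ> \<sigma>) xs))"
    using xs by (intro sum.cong) (simp_all add: \<tau>(2) permute_list_compose)
  also have "\<dots> = (\<Sum>\<sigma>\<in>?P. teval T (permute_list \<sigma> xs))"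
    by (rule setum_permutations_compose_left[OF \<tau>(1), symmetric])
  finally show "teval (Psym p T) xs = teval (Psym p T) ys"
    using xs by (simp add: teval_Psym \<tau>(2))
qed

lemma pascal_sum:
  fixes h :: "nat \<Rightarrow> real"
  shows "(\<Sum>l\<le>k. real (k choose l) * h l) + (\<Sum>l\<le>k. real (k choose l) * h (Suc l)) =
         (\<Sum>l\<le>Suc k. real (Suc k choose l) * h l)"
proof -
  have a: "(\<Sum>l\<le>k. real (k choose l) * h l) = (\<Sum>l\<le>Suc k. real (k choose l) * h l)"
    by simp
  have b: "(\<Sum>l\<le>Suc k. real (k choose l) * h l) = h 0 + (\<Sum>l\<le>k. real (k choose Suc l) * h (Suc l))"
    by (subst sum.atMost_Suc_shift) simp
  have c: "(\<Sum>l\<le>Suc k. real (Suc k choose l) * h l) =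
      h 0 + (\<Sum>l\<le>k. real (Suc k choose Suc l) * h (Suc l))"
    by (subst sum.atMost_Suc_shift) simp
  show ?thesis unfolding a b c
    by (simp add: sum.distrib[symmetric] algebra_simps)
qed

lemma sym_tensor_binomial_gen:
  assumes "sym_tensor p T" "k + i + j = p"
  shows "teval T (replicate k (x + t *\<^sub>R y) @ replicate i y @ replicate j x) =
    (\<Sum>l\<le>k. real (k choose l) * t ^ l * teval T (replicate (i + l) y @ replicate (j + k - l) x))"
  using assms(2)
proof (induction k arbitrary: i j)
  case (Suc k)
  let ?G = "\<lambda>a b. teval T (replicate a y @ replicate b x)"
  let ?z = "x + t *\<^sub>R y"
  let ?h = "\<lambda>l. t ^ l * ?G (i + l) (j + Suc k - l)"
  have "teval T (x # replicate k ?z @ replicate i y @ replicate j x) =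
      teval T (replicate k ?z @ replicate i y @ replicate (Suc j) x)"
    by (rule sym_tensor_teval_mset[OF assms(1)]) (use Suc.prems in \<open>simp_all add: add_ac\<close>)
  also have "\<dots> = (\<Sum>l\<le>k. real (k choose l) * t ^ l * ?G (i + l) (Suc j + k - l))"
    by (rule Suc.IH) (use Suc.prems in simp)
  also have "\<dots> = (\<Sum>l\<le>k. real (k choose l) * ?h l)"
    by (simp add: mult_ac)
  finally have x_first: "teval T (x # replicate k ?z @ replicate i y @ replicate j x) =
      (\<Sum>l\<le>k. real (k choose l) * ?h l)" .
  have "teval T (y # replicate k ?z @ replicate i y @ replicate j x) =
      teval T (replicate k ?z @ replicate (Suc i) y @ replicate j x)"
    by (rule sym_tensor_teval_mset[OF assms(1)]) (use Suc.prems in \<open>simp_all add: add_ac\<close>)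
  also have "\<dots> = (\<Sum>l\<le>k. real (k choose l) * t ^ l * ?G (Suc i + l) (j + k - l))"
    by (rule Suc.IH) (use Suc.prems in simp)
  finally have "t * teval T (y # replicate k ?z @ replicate i y @ replicate j x) =
      (\<Sum>l\<le>k. real (k choose l) * ?h (Suc l))"
    by (simp add: sum_distrib_left mult_ac)
  with x_first have "teval T (replicate (Suc k) ?z @ replicate i y @ replicate j x) =
      (\<Sum>l\<le>k. real (k choose l) * ?h l) + (\<Sum>l\<le>k. real (k choose l) * ?h (Suc l))"
    by (simp add: teval_Cons_add teval_Cons_scaleR del: teval.simps)
  also have "\<dots> = (\<Sum>l\<le>Suc k. real (Suc k choose l) * ?h l)"
    by (rule pascal_sum)
  finally show ?case by (simp add: mult_ac)
qed simp

lemma sym_tensor_binomial: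
  assumes "sym_tensor p T"
  shows "teval T (replicate p (x + t *\<^sub>R y)) =
    (\<Sum>l\<le>p. (real (p choose l) * teval T (replicate l y @ replicate (p - l) x)) * t ^ l)"
  using sym_tensor_binomial_gen[OF assms, of p 0 0 x t y] by (simp add: mult_ac)

lemma sym_tensor_eq_zeroI_diag:
  assumes "sym_tensor p T" "\<And>x. teval T (replicate p x) = 0"
  shows "T = (\<lambda>_. 0)"
  using assms
proof (induction p arbitrary: T)
  case 0
  show ?case
  proof
    fix ys :: "'a list"
    show "T ys = 0"
      using "0.prems"(2)[of 0] sym_tensor_is_tensor[OF "0.prems"(1)]
      by (cases ys) (simp_all add: is_tensor_def)
  qed
next
  case (Suc p)
  have contr_zero: "contr T s = (\<lambda>_. 0)" for s
  proof (rule Suc.IH)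
    show "sym_tensor p (contr T s)" by (rule sym_contr[OF Suc.prems(1)])
    fix x :: "real^'a"
    have "\<forall>t. (\<Sum>l\<le>Suc p. (real (Suc p choose l) * teval T (replicate l s @ replicate (Suc p - l) x)) * t ^ l) = 0"
      using sym_tensor_binomial[OF Suc.prems(1), of x _ s] Suc.prems(2) by (simp del: teval.simps)
    then have "\<forall>l\<le>Suc p. real (Suc p choose l) * teval T (replicate l s @ replicate (Suc p - l) x) = 0"
      by (simp only: polyfun_eq_0)
    then show "teval (contr T s) (replicate p x) = 0"
      by (auto simp add: teval_contr simp del: teval.simps dest: spec[of _ 1])
  qed
  show ?case
  proof
    fix ys :: "'a list"
    show "T ys = 0"
    proof (cases ys)
      case Nil
      then show ?thesis using sym_tensor_is_tensor[OF Suc.prems(1)] by (simp add: is_tensor_def)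
    next
      case (Cons a zs)
      have "contr T (axis a 1) zs = (\<Sum>i\<in>UNIV. if i = a then T (i # zs) else 0)"
        unfolding contr_def by (rule sum.cong) (simp_all add: axis_def)
      then have "contr T (axis a 1) zs = T (a # zs)" by simp
      then show ?thesis using contr_zero[of "axis a 1"] Cons by (simp add: fun_eq_iff)
    qed
  qed
qed

lemma sym_tensor_eqI_diag:
  assumes "sym_tensor p A" "sym_tensor p B" "\<And>x. teval A (replicate p x) = teval B (replicate p x)"
  shows "A = B"
proof -
  have "tsub A B = (\<lambda>_. 0)"
    by (rule sym_tensor_eq_zeroI_diag[OF sym_tsub[OF assms(1,2)]]) (simp add: teval_tsub assms(3))
  then show ?thesis by (simp add: tsub_def fun_eq_iff)
qed

section \<open>Change of basis\<close>

lemma is_tensor_tensor_mat: "is_tensor p (tensor_mat p T M)"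
  by (simp add: is_tensor_def tensor_mat_def)

lemma is_tensor_contr: "is_tensor (Suc q) T \<Longrightarrow> is_tensor q (contr T s)"
  by (simp add: is_tensor_def contr_def)

lemma tensor_mat_tadd: "tensor_mat p (tadd A B) M = tadd (tensor_mat p A M) (tensor_mat p B M)"
  by (simp add: tensor_mat_def tadd_def fun_eq_iff sum.distrib distrib_right)

lemma tensor_mat_zero: "tensor_mat p (\<lambda>_. 0) M = (\<lambda>_. 0)"
  by (simp add: tensor_mat_def fun_eq_iff)

lemma tensor_mat_tensor_mat:
  "tensor_mat p (tensor_mat p T M) N = tensor_mat p (T :: 'n::finite tensor) (M ** N)"
  by (rule tensor_eqI[OF is_tensor_tensor_mat is_tensor_tensor_mat])
    (simp add: teval_tensor_mat matrix_vector_mul_assoc comp_def)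

lemma tensor_mat_mat_1: "is_tensor p T \<Longrightarrow> tensor_mat p (T :: 'n::finite tensor) (mat 1) = T"
  by (rule tensor_eqI[OF is_tensor_tensor_mat]) (simp_all add: teval_tensor_mat map_idI)

lemma tensor_mat_inj:
  assumes "is_tensor p A" "is_tensor p B" "invertible W"
    and "tensor_mat p A W = tensor_mat p (B :: 'n::finite tensor) W"
  shows "A = B"
proof -
  obtain W' where "W ** W' = mat 1" using assms(3) unfolding invertible_def by blast
  then show ?thesis
    using arg_cong[OF assms(4), of "\<lambda>T. tensor_mat p T W'"]
    by (simp add: tensor_mat_tensor_mat tensor_mat_mat_1 assms(1,2))
qed

lemma tensor_mat_eq_zero_iff:
  assumes "is_tensor p T" "invertible W"
  shows "tensor_mat p T W = (\<lambda>_. 0) \<longleftrightarrow> T = (\<lambda>_. (0 :: real))"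
  using tensor_mat_inj[OF assms(1) _ assms(2), of "\<lambda>_. 0"] by (auto simp: is_tensor_def tensor_mat_zero)

lemma contr_tensor_mat:
  "contr (tensor_mat (Suc q) T M) u = tensor_mat q (contr (T :: 'n::finite tensor) (M *v u)) M"
  by (rule tensor_eqI[OF is_tensor_contr[OF is_tensor_tensor_mat] is_tensor_tensor_mat])
    (simp add: teval_contr teval_tensor_mat del: teval.simps)

lemma Psym_outer_commute:
  "Psym (m + n) (outer m A B) = Psym (m + n) (outer n B (A :: 'n::finite tensor))"
  by (rule sym_tensor_eqI_diag[OF sym_Psym sym_Psym])
    (simp add: teval_Psym_replicate teval_outer_replicate del: teval.simps)

lemma teval_Psym_outer_vec_replicate:
  "teval (Psym (Suc q) (outer q A (vec_tensor v))) (replicate (Suc q) x) =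
   teval A (replicate q x) * (v \<bullet> x)"
  unfolding teval_Psym_replicate teval_outer_replicate[OF le_SucI[OF order_refl]]
  by (simp add: teval_vec_tensor del: teval.simps)

lemma tensor_mat_Psym_outer_vec:
  "tensor_mat (Suc q) (Psym (Suc q) (outer q A (vec_tensor v))) W =
   Psym (Suc q) (outer q (tensor_mat q (A :: 'n::finite tensor) W) (vec_tensor (transpose W *v v)))"
proof (rule sym_tensor_eqI_diag[OF sym_tensor_mat[OF sym_Psym] sym_Psym])
  fix x :: "real^'n"
  have "v \<bullet> (W *v x) = (transpose W *v v) \<bullet> x"
    by (simp add: dot_lmul_matrix)
  then show "teval (tensor_mat (Suc q) (Psym (Suc q) (outer q A (vec_tensor v))) W) (replicate (Suc q) x) =
    teval (Psym (Suc q) (outer q (tensor_mat q A W) (vec_tensor (transpose W *v v)))) (replicate (Suc q) x)"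
    by (simp add: teval_tensor_mat teval_Psym_outer_vec_replicate del: teval.simps replicate.simps)
qed

section \<open>The Frobenius inner product\<close>

definition frob_inner :: "nat \<Rightarrow> 'n::finite tensor \<Rightarrow> 'n tensor \<Rightarrow> real" where
  "frob_inner p X Y = (\<Sum>zs\<in>{zs. length zs = p}. X zs * Y zs)"

lemma frob_inner_Psym:
  assumes "sym_tensor p Y"
  shows "frob_inner p (Psym p B) Y = frob_inner p B Y"
proof -
  let ?L = "{zs::'n list. length zs = p}"
  let ?P = "{\<sigma>. \<sigma> permutes {..<p}}"
  have "frob_inner p (Psym p B) Y = (1 / fact p) * (\<Sum>zs\<in>?L. \<Sum>\<sigma>\<in>?P. B (permute_list \<sigma> zs) * Y zs)"
    by (simp add: frob_inner_def Psym_def perm_tensor_def sum_distrib_left sum_distrib_right mult_ac)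
  also have "\<dots> = (1 / fact p) * (\<Sum>\<sigma>\<in>?P. \<Sum>zs\<in>?L. B (permute_list \<sigma> zs) * Y (permute_list \<sigma> zs))"
    using assms by (subst sum.swap) (simp add: sym_tensor_def perm_tensor_def fun_eq_iff)
  also have "\<dots> = (1 / fact p) * (\<Sum>\<sigma>\<in>?P. frob_inner p B Y)"
    by (simp add: frob_inner_def sum_lists_length_permute[where F = "\<lambda>zs. B zs * Y zs"])
  also have "\<dots> = frob_inner p B Y"
    by (simp add: card_permutations)
  finally show ?thesis .
qed

lemma frob_inner_outer_vec:
  "frob_inner (Suc q) (outer 1 (vec_tensor u) A) Y = frob_inner q A (contr Y u)"
proof -
  have "frob_inner (Suc q) (outer 1 (vec_tensor u) A) Y =
      (\<Sum>i\<in>UNIV. \<Sum>ws\<in>{ws. length ws = q}. A ws * (u $ i * Y (i # ws)))"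
    by (simp add: frob_inner_def sum_lists_length_Suc outer_def vec_tensor_def mult_ac)
  also have "\<dots> = frob_inner q A (contr Y u)"
    by (subst sum.swap) (simp add: frob_inner_def contr_def sum_distrib_left)
  finally show ?thesis .
qed

lemma frob_inner_self_pos:
  assumes "is_tensor p Y" "Y \<noteq> (\<lambda>_. 0)"
  shows "frob_inner p Y Y > 0"
proof -
  obtain zs where "Y zs \<noteq> 0" using assms(2) by auto
  moreover from this have "length zs = p" using assms(1) by (auto simp: is_tensor_def)
  ultimately show ?thesis
    unfolding frob_inner_def
    by (intro sum_pos2[of _ zs]) (auto simp: finite_lists_length zero_less_mult_iff)
qed

lemma frob_norm_less_tadd:
  assumes "frob_inner p X Y = 0" "is_tensor p Y" "Y \<noteq> (\<lambda>_. 0)"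
  shows "frob_norm p X < frob_norm p (tadd X Y)"
proof -
  have "frob_inner p (tadd X Y) (tadd X Y) =
      frob_inner p X X + 2 * frob_inner p X Y + frob_inner p Y Y"
    by (simp add: frob_inner_def tadd_def algebra_simps sum.distrib sum_distrib_left)
  then have "frob_inner p (tadd X Y) (tadd X Y) = frob_inner p X X + frob_inner p Y Y"
    using assms(1) by simp
  with frob_inner_self_pos[OF assms(2,3)] show ?thesis
    by (simp add: frob_norm_def frob_inner_def power2_eq_square)
qed

section \<open>Recovering the factor \<open>A\<close> from \<open>P\<^sub>s\<^sub>y\<^sub>m(A \<otimes> v)[s]\<close>\<close>

lemma teval_replicate_shift_contr_zero:
  assumes "sym_tensor (Suc q) X" "contr X s = (\<lambda>_. 0)"
  shows "teval X (replicate (Suc q) (x + t *\<^sub>R s)) = teval X (replicate (Suc q) x)"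
proof -
  have s_first: "teval X (s # ys) = 0" for ys
    using teval_contr[of X s ys] by (simp add: assms(2) teval_zero del: teval.simps)
  have "teval X (replicate (Suc q) (x + t *\<^sub>R s)) =
      (\<Sum>l\<le>Suc q. (real (Suc q choose l) * teval X (replicate l s @ replicate (Suc q - l) x)) * t ^ l)"
    by (rule sym_tensor_binomial[OF assms(1)])
  also have "\<dots> = teval X (replicate (Suc q) x)"
    by (subst sum.atMost_Suc_shift) (simp add: s_first del: teval.simps)
  finally show ?thesis .
qed

lemma teval_replicate_zero_if_cofinite_shifts:
  assumes "sym_tensor q A" "finite F"
    and "\<And>t. t \<notin> F \<Longrightarrow> teval A (replicate q (x + t *\<^sub>R s)) = 0"
  shows "teval A (replicate q x) = 0"
proof -
  define c where "c l = real (q choose l) * teval A (replicate l s @ replicate (q - l) x)" for l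
  have "{t. (\<Sum>l\<le>q. c l * t ^ l) = 0} \<supseteq> - F"
    using assms(3) sym_tensor_binomial[OF assms(1), of x _ s] by (auto simp: c_def)
  moreover have "infinite (- F :: real set)"
    using assms(2) by (simp add: Compl_eq_Diff_UNIV infinite_UNIV_char_0)
  ultimately have "infinite {t. (\<Sum>l\<le>q. c l * t ^ l) = 0}"
    using infinite_super by blast
  then have "c 0 = 0"
    using polyfun_finite_roots[of c q] by auto
  then show ?thesis by (simp add: c_def)
qed

lemma Psym_outer_vec_contr_eq_zero:
  assumes "sym_tensor q A" "v \<bullet> s \<noteq> 0"
    and "contr (Psym (Suc q) (outer q A (vec_tensor v))) s = (\<lambda>_. 0)"
  shows "A = (\<lambda>_. 0)"
proof (rule sym_tensor_eq_zeroI_diag[OF assms(1)])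
  let ?f = "\<lambda>z. teval A (replicate q z)"
  have shift: "?f (x + t *\<^sub>R s) * (v \<bullet> x + t * (v \<bullet> s)) = ?f x * (v \<bullet> x)" for x t
    using teval_replicate_shift_contr_zero[OF sym_Psym assms(3), of x t]
    by (simp add: teval_Psym_outer_vec_replicate inner_add_right del: teval.simps replicate.simps)
  have diag_zero: "?f x * (v \<bullet> x) = 0" for x
    using shift[of x "- (v \<bullet> x) / (v \<bullet> s)"] assms(2) by simp
  have off_line: "?f (x + t *\<^sub>R s) = 0" if "t \<notin> {- (v \<bullet> x) / (v \<bullet> s)}" for x t
  proof -
    have "t * (v \<bullet> s) \<noteq> - (v \<bullet> x)"
      using that assms(2) by (simp add: field_simps)
    then have "v \<bullet> (x + t *\<^sub>R s) \<noteq> 0"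
      by (simp add: inner_add_right add_eq_0_iff2)
    then show ?thesis using diag_zero[of "x + t *\<^sub>R s"] by simp
  qed
  show "?f x = 0" for x
    by (rule teval_replicate_zero_if_cofinite_shifts[OF assms(1), of "{- (v \<bullet> x) / (v \<bullet> s)}" _ s])
      (simp_all add: off_line)
qed

section \<open>Minimality of corrections of the form \<open>P\<^sub>s\<^sub>y\<^sub>m(A \<otimes> v)\<close>\<close>

lemma frob_norm_Psym_outer_correction_less:
  assumes "sym_tensor (Suc q) C" "sym_tensor (Suc q) C0" "invertible W"
    and "tsub C0 Cb = Psym (Suc q) (outer q A (vec_tensor v))"
    and "W *v (transpose W *v v) = s"
    and "contr C s = contr C0 s" "C \<noteq> C0"
  shows "frob_norm (Suc q) (tensor_mat (Suc q) (tsub C0 Cb) W) <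
         frob_norm (Suc q) (tensor_mat (Suc q) (tsub C Cb) W)"
proof -
  define u where "u = transpose W *v v"
  define X where "X = tensor_mat (Suc q) (tsub C0 Cb) W"
  define Y where "Y = tensor_mat (Suc q) (tsub C C0) W"
  have X_eq: "X = Psym (q + 1) (outer 1 (vec_tensor u) (tensor_mat q A W))"
    using Psym_outer_commute[of q 1] by (simp add: X_def assms(4) tensor_mat_Psym_outer_vec u_def)
  have "contr (tsub C C0) s = (\<lambda>_. 0)"
    unfolding contr_tsub assms(6) by (simp add: tsub_def)
  then have Y_u: "contr Y u = (\<lambda>_. 0)"
    unfolding Y_def contr_tensor_mat u_def assms(5) by (simp add: tensor_mat_zero)
  have "sym_tensor (Suc q) Y"
    unfolding Y_def by (intro sym_tensor_mat sym_tsub assms(1,2))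
  then have "frob_inner (Suc q) X Y = frob_inner (Suc q) (outer 1 (vec_tensor u) (tensor_mat q A W)) Y"
    using X_eq frob_inner_Psym by simp
  also have "\<dots> = frob_inner q (tensor_mat q A W) (contr Y u)"
    by (rule frob_inner_outer_vec)
  finally have "frob_inner (Suc q) X Y = 0"
    by (simp add: Y_u frob_inner_def)
  moreover have "Y \<noteq> (\<lambda>_. 0)"
    using tensor_mat_eq_zero_iff[OF sym_tensor_is_tensor[OF sym_tsub[OF assms(1,2)]] assms(3)] assms(7)
    by (simp add: Y_def tsub_eq_zero_iff)
  moreover have "is_tensor (Suc q) Y"
    by (simp add: Y_def is_tensor_tensor_mat)
  ultimately have "frob_norm (Suc q) X < frob_norm (Suc q) (tadd X Y)"
    by (intro frob_norm_less_tadd)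
  moreover have "tadd X Y = tensor_mat (Suc q) (tsub C Cb) W"
    by (simp add: X_def Y_def tensor_mat_tadd[symmetric]) (simp add: tadd_def tsub_def)
  ultimately show ?thesis
    by (simp add: X_def)
qed

section \<open>The secant update\<close>

definition oblique_proj :: "real^'n \<Rightarrow> real^'n \<Rightarrow> real^'n^'n" where
  "oblique_proj a b = mat 1 - (1 / (b \<bullet> a)) *\<^sub>R (\<chi> i j. a $ i * b $ j)"

lemma oblique_proj_apply: "oblique_proj a b *v x = x - ((b \<bullet> x) / (b \<bullet> a)) *\<^sub>R (a :: real^'n::finite)"
proof -
  have "(\<chi> i j. a $ i * b $ j) *v x = (b \<bullet> x) *\<^sub>R a"
    by (simp add: vec_eq_iff matrix_vector_mult_def inner_vec_def sum_distrib_left mult_ac)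
  then show ?thesis
    by (simp add: oblique_proj_def matrix_vector_mult_diff_rdistrib scaleR_matrix_vector_assoc[symmetric])
qed

lemma matrix_mul_oblique_proj:
  assumes "W' ** W = mat 1"
  shows "W ** oblique_proj a b = oblique_proj (W *v a) (transpose W' *v b) ** (W :: real^'n::finite^'n)"
proof -
  have "(transpose W' *v b) \<bullet> (W *v y) = b \<bullet> y" for y
    by (simp add: dot_lmul_matrix matrix_vector_mul_assoc assms)
  then show ?thesis
    by (simp add: matrix_eq oblique_proj_apply matrix_vector_mul_assoc[symmetric]
        matrix_vector_mult_diff_distrib matrix_vector_mult_scaleR)
qed

lemma matrix_inv_inverse:
  assumes "invertible (W :: 'a::semiring_1^'n^'n)"
  shows "W ** matrix_inv W = mat 1" "matrix_inv W ** W = mat 1"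
  using someI_ex[OF assms[unfolded invertible_def]] by (simp_all add: matrix_inv_def)

definition secant_update :: "nat \<Rightarrow> 'n::finite tensor \<Rightarrow> 'n tensor \<Rightarrow> real^'n \<Rightarrow> real^'n \<Rightarrow> 'n tensor"
  where "secant_update p Cb Ct s v = tadd Ct (tensor_mat p (tsub Cb Ct) (oblique_proj s v))"

definition secant_coef :: "nat \<Rightarrow> real \<Rightarrow> nat \<Rightarrow> real" where
  "secant_coef p c j = (-1) ^ (j + 1) * real (p choose j) * c powi (- int j)"

lemma sym_secant_update:
  "sym_tensor p Cb \<Longrightarrow> sym_tensor p Ct \<Longrightarrow> sym_tensor p (secant_update p Cb Ct s v)"
  unfolding secant_update_def by (intro sym_tadd sym_tensor_mat sym_tsub)

lemma contr_secant_update: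
  assumes "v \<bullet> s \<noteq> 0"
  shows "contr (secant_update (Suc q) Cb Ct s v) s = contr Ct s"
proof -
  have "oblique_proj s v *v s = 0"
    using assms by (simp add: oblique_proj_apply)
  then have "contr (tensor_mat (Suc q) (tsub Cb Ct) (oblique_proj s v)) s = (\<lambda>_. 0)"
    unfolding contr_tensor_mat by (simp add: contr_def tensor_mat_zero)
  then show ?thesis
    unfolding secant_update_def contr_tadd by (simp add: tadd_def)
qed

lemma teval_secant_update_replicate:
  assumes "sym_tensor p Cb" "sym_tensor p Ct" "v \<bullet> s \<noteq> 0"
  shows "teval (secant_update p Cb Ct s v) (replicate p x) = teval Cb (replicate p x) +
    (\<Sum>j\<in>{1..p}. secant_coef p (v \<bullet> s) j *
       ((v \<bullet> x) ^ j * teval (tsub Ct Cb) (replicate j s @ replicate (p - j) x)))"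
proof -
  let ?E = "tsub Ct Cb"
  let ?t = "- (v \<bullet> x / (v \<bullet> s))"
  let ?e = "\<lambda>j. teval ?E (replicate j s @ replicate (p - j) x)"
  have "oblique_proj s v *v x = x + ?t *\<^sub>R s"
    by (simp add: oblique_proj_apply)
  then have "teval (secant_update p Cb Ct s v) (replicate p x) =
      teval Ct (replicate p x) - teval ?E (replicate p (x + ?t *\<^sub>R s))"
    by (simp add: secant_update_def teval_tadd teval_tensor_mat teval_tsub del: teval.simps)
  also have "teval ?E (replicate p (x + ?t *\<^sub>R s)) = (\<Sum>j\<le>p. (real (p choose j) * ?e j) * ?t ^ j)"
    by (rule sym_tensor_binomial[OF sym_tsub[OF assms(2,1)]])
  also have "\<dots> = teval ?E (replicate p x) + (\<Sum>j\<in>{1..p}. (real (p choose j) * ?e j) * ?t ^ j)"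
    by (simp add: atMost_atLeast0 sum.atLeast_Suc_atMost)
  also have "(\<Sum>j\<in>{1..p}. (real (p choose j) * ?e j) * ?t ^ j) =
      - (\<Sum>j\<in>{1..p}. secant_coef p (v \<bullet> s) j * ((v \<bullet> x) ^ j * ?e j))"
  proof -
    have "?t ^ j = (-1) ^ j * ((v \<bullet> x) ^ j / (v \<bullet> s) ^ j)" for j
      by (subst power_minus) (simp add: power_divide)
    then show ?thesis
      by (simp add: secant_coef_def sum_negf[symmetric] power_int_minus divide_inverse mult_ac)
  qed
  finally show ?thesis
    by (simp add: teval_tsub del: teval.simps)
qed

lemma secant_update_eq_sum:
  assumes "sym_tensor p Cb" "sym_tensor p Ct" "v \<bullet> s \<noteq> 0"
  shows "secant_update p Cb Ct s v = tadd Cb (tsum (\<lambda>j. tscale (secant_coef p (v \<bullet> s) j)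
      (Psym p (outer j (tensor_power j v) (contr_pow (tsub Ct Cb) s j)))) {1..p})"
proof (rule sym_tensor_eqI_diag)
  show "sym_tensor p (secant_update p Cb Ct s v)"
    by (rule sym_secant_update[OF assms(1,2)])
  show "sym_tensor p (tadd Cb (tsum (\<lambda>j. tscale (secant_coef p (v \<bullet> s) j)
      (Psym p (outer j (tensor_power j v) (contr_pow (tsub Ct Cb) s j)))) {1..p}))"
    by (intro sym_tadd assms(1) sym_tsum sym_tscale sym_Psym)
  fix x
  have "teval (Psym p (outer j (tensor_power j v) (contr_pow (tsub Ct Cb) s j))) (replicate p x) =
      (v \<bullet> x) ^ j * teval (tsub Ct Cb) (replicate j s @ replicate (p - j) x)" if "j \<in> {1..p}" for j
    using that
    by (simp add: teval_Psym_replicate teval_outer_replicate teval_tensor_power teval_contr_pow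
        del: teval.simps)
  then show "teval (secant_update p Cb Ct s v) (replicate p x) = teval (tadd Cb (tsum (\<lambda>j.
      tscale (secant_coef p (v \<bullet> s) j) (Psym p (outer j (tensor_power j v) (contr_pow (tsub Ct Cb) s j))))
      {1..p})) (replicate p x)"
    by (simp add: teval_secant_update_replicate[OF assms] teval_tadd teval_tsum teval_tscale
        del: teval.simps)
qed

text \<open>The tensor \<open>A\<close> of (c): each summand of (b) with one factor \<open>v\<close> split off.\<close>

definition secant_factor :: "nat \<Rightarrow> 'n::finite tensor \<Rightarrow> 'n tensor \<Rightarrow> real^'n \<Rightarrow> real^'n \<Rightarrow> 'n tensor"
  where "secant_factor q Cb Ct s v = tsum (\<lambda>j. tscale (secant_coef (Suc q) (v \<bullet> s) j)
      (Psym q (outer (j - 1) (tensor_power (j - 1) v) (contr_pow (tsub Ct Cb) s j)))) {1..Suc q}"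

lemma sym_secant_factor: "sym_tensor q (secant_factor q Cb Ct s v)"
  unfolding secant_factor_def by (intro sym_tsum sym_tscale sym_Psym)

lemma secant_update_eq_Psym_outer:
  assumes "sym_tensor (Suc q) Cb" "sym_tensor (Suc q) Ct" "v \<bullet> s \<noteq> 0"
  shows "secant_update (Suc q) Cb Ct s v =
    tadd Cb (Psym (Suc q) (outer q (secant_factor q Cb Ct s v) (vec_tensor v)))"
proof (rule sym_tensor_eqI_diag)
  show "sym_tensor (Suc q) (secant_update (Suc q) Cb Ct s v)"
    by (rule sym_secant_update[OF assms(1,2)])
  show "sym_tensor (Suc q) (tadd Cb (Psym (Suc q) (outer q (secant_factor q Cb Ct s v) (vec_tensor v))))"
    by (intro sym_tadd assms(1) sym_Psym)
  fix x
  let ?E = "tsub Ct Cb"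
  have summand_diag: "teval (Psym q (outer (j - 1) (tensor_power (j - 1) v) (contr_pow ?E s j))) (replicate q x) *
      (v \<bullet> x) = (v \<bullet> x) ^ j * teval ?E (replicate j s @ replicate (Suc q - j) x)"
    if "j \<in> {1..Suc q}" for j
  proof -
    have j: "j - 1 \<le> q" "q - (j - 1) = Suc q - j" "(v \<bullet> x) ^ (j - 1) * (v \<bullet> x) = (v \<bullet> x) ^ j"
      using that by (auto simp: power_Suc2[symmetric])
    show ?thesis
      unfolding teval_Psym_replicate teval_outer_replicate[OF j(1)] teval_tensor_power teval_contr_pow
        j(2) j(3)[symmetric]
      by (simp only: mult_ac)
  qed
  have "teval (secant_factor q Cb Ct s v) (replicate q x) * (v \<bullet> x) =
      (\<Sum>j\<in>{1..Suc q}. secant_coef (Suc q) (v \<bullet> s) j *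
         (teval (Psym q (outer (j - 1) (tensor_power (j - 1) v) (contr_pow ?E s j))) (replicate q x) *
          (v \<bullet> x)))"
    unfolding secant_factor_def teval_tsum[OF finite_atLeastAtMost] teval_tscale sum_distrib_right
    by (simp only: mult.assoc)
  also have "\<dots> = (\<Sum>j\<in>{1..Suc q}. secant_coef (Suc q) (v \<bullet> s) j *
         ((v \<bullet> x) ^ j * teval ?E (replicate j s @ replicate (Suc q - j) x)))"
    by (intro sum.cong refl) (simp only: summand_diag)
  finally have factor_diag: "teval (secant_factor q Cb Ct s v) (replicate q x) * (v \<bullet> x) = \<dots>" .
  show "teval (secant_update (Suc q) Cb Ct s v) (replicate (Suc q) x) =
    teval (tadd Cb (Psym (Suc q) (outer q (secant_factor q Cb Ct s v) (vec_tensor v)))) (replicate (Suc q) x)"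
    by (simp add: teval_secant_update_replicate[OF assms] teval_tadd teval_Psym_outer_vec_replicate
        factor_diag del: teval.simps replicate.simps)
qed

lemma secant_factor_unique:
  assumes "sym_tensor (Suc q) Cb" "sym_tensor (Suc q) Ct" "v \<bullet> s \<noteq> 0"
  shows "sym_tensor q A \<and> contr (Psym (Suc q) (outer q A (vec_tensor v))) s = contr (tsub Ct Cb) s
    \<longleftrightarrow> A = secant_factor q Cb Ct s v"
proof -
  let ?F = "secant_factor q Cb Ct s v"
  have F_contr: "contr (Psym (Suc q) (outer q ?F (vec_tensor v))) s = contr (tsub Ct Cb) s"
  proof -
    have "Psym (Suc q) (outer q ?F (vec_tensor v)) = tsub (secant_update (Suc q) Cb Ct s v) Cb"
      by (simp add: secant_update_eq_Psym_outer[OF assms] tadd_def tsub_def)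
    then show ?thesis
      by (simp add: contr_tsub contr_secant_update[OF assms(3)])
  qed
  have "A = ?F" if "sym_tensor q A" "contr (Psym (Suc q) (outer q A (vec_tensor v))) s = contr (tsub Ct Cb) s"
  proof -
    have "contr (Psym (Suc q) (outer q (tsub A ?F) (vec_tensor v))) s = (\<lambda>_. 0)"
      unfolding Psym_outer_tsub contr_tsub that(2) F_contr by (simp add: tsub_def)
    then have "tsub A ?F = (\<lambda>_. 0)"
      by (rule Psym_outer_vec_contr_eq_zero[OF sym_tsub[OF that(1) sym_secant_factor] assms(3)])
    then show ?thesis by (simp add: tsub_eq_zero_iff)
  qed
  then show ?thesis
    using sym_secant_factor F_contr by blast
qed

lemma weighted_secant_vector:
  fixes W :: "real^'n::finite^'n" and s :: "real^'n"
  assumes "invertible W"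
  defines "u \<equiv> matrix_inv W *v s"
  defines "v \<equiv> transpose (matrix_inv W) *v u"
  shows "W *v u = s" "W *v (transpose W *v v) = s" "s \<bullet> v = u \<bullet> u"
proof -
  show Wu: "W *v u = s"
    by (simp add: u_def matrix_vector_mul_assoc matrix_inv_inverse[OF assms(1)])
  have "transpose W *v v = u"
    unfolding v_def matrix_vector_mul_assoc matrix_transpose_mul[symmetric] matrix_inv_inverse[OF assms(1)]
    by (simp add: transpose_mat)
  with Wu show "W *v (transpose W *v v) = s" by simp
  show "s \<bullet> v = u \<bullet> u"
    by (simp add: v_def Wu[symmetric] inner_commute[of "W *v u"] dot_lmul_matrix matrix_vector_mul_assoc
        matrix_inv_inverse[OF assms(1)])
qed

lemma secant_update_min_norm:
  assumes "sym_tensor (Suc q) Cb" "sym_tensor (Suc q) Ct" "sym_tensor (Suc q) C" "invertible W"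
    and "W *v (transpose W *v v) = s" "v \<bullet> s \<noteq> 0"
    and "contr C s = contr Ct s" "C \<noteq> secant_update (Suc q) Cb Ct s v"
  shows "frob_norm (Suc q) (tensor_mat (Suc q) (tsub (secant_update (Suc q) Cb Ct s v) Cb) W) <
         frob_norm (Suc q) (tensor_mat (Suc q) (tsub C Cb) W)"
proof (rule frob_norm_Psym_outer_correction_less[OF assms(3) sym_secant_update[OF assms(1,2)] assms(4) _ assms(5)])
  show "tsub (secant_update (Suc q) Cb Ct s v) Cb =
      Psym (Suc q) (outer q (secant_factor q Cb Ct s v) (vec_tensor v))"
    by (simp add: secant_update_eq_Psym_outer[OF assms(1,2,6)] tadd_def tsub_def)
  show "contr C s = contr (secant_update (Suc q) Cb Ct s v) s"
    by (simp add: assms(7) contr_secant_update[OF assms(6)])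
qed (rule assms(8))

lemma tensor_mat_secant_update_iff:
  assumes "sym_tensor p Cb" "sym_tensor p Ct" "sym_tensor p C" "invertible W" "W *v u = s"
  shows "tensor_mat p (tsub C Ct) W = tensor_mat p (tensor_mat p (tsub Cb Ct) W) (oblique_proj u u) \<longleftrightarrow>
    C = secant_update p Cb Ct s (transpose (matrix_inv W) *v u)"
proof -
  let ?Cp = "secant_update p Cb Ct s (transpose (matrix_inv W) *v u)"
  have "W ** oblique_proj u u = oblique_proj s (transpose (matrix_inv W) *v u) ** W"
    using matrix_mul_oblique_proj[OF matrix_inv_inverse(2)[OF assms(4)]] by (simp only: assms(5))
  then have "tensor_mat p (tensor_mat p (tsub Cb Ct) W) (oblique_proj u u) = tensor_mat p (tsub ?Cp Ct) W"
    by (simp add: tensor_mat_tensor_mat secant_update_def tadd_def tsub_def)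
  then show ?thesis
    using tensor_mat_inj[OF _ _ assms(4), of p "tsub C Ct" "tsub ?Cp Ct"]
      sym_tensor_is_tensor[OF sym_tsub[OF assms(3,2)]]
      sym_tensor_is_tensor[OF sym_tsub[OF sym_secant_update[OF assms(1,2)] assms(2)]]
    by (auto simp: tsub_def fun_eq_iff)
qed

lemma strict_minimizer_iff:
  fixes f :: "'a \<Rightarrow> 'b::order"
  assumes "P x0" "\<And>y. P y \<Longrightarrow> y \<noteq> x0 \<Longrightarrow> f x0 < f y"
  shows "(P x \<and> (\<forall>y. P y \<and> y \<noteq> x \<longrightarrow> f x < f y)) \<longleftrightarrow> x = x0"
  using assms by (auto dest: less_asym)

theorem mainTheorem1:
  fixes p :: nat and Cb Ct :: "'n::finite tensor" and W :: "real ^ 'n ^ 'n" and s :: "real ^ 'n"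
  assumes "p \<ge> 2"
    and "sym_tensor p Cb" and "sym_tensor p Ct"
    and "invertible W"
    and "s \<noteq> 0"
  defines "v \<equiv> transpose (matrix_inv W) *v (matrix_inv W *v s)"
  shows "\<exists>Cp. sym_tensor p Cp
    \<comment> \<open>(a)\<close>
    \<and> (\<forall>C. (sym_tensor p C \<and> contr C s = contr Ct s \<and>
              (\<forall>C'. sym_tensor p C' \<and> contr C' s = contr Ct s \<and> C' \<noteq> C \<longrightarrow>
                 frob_norm p (tensor_mat p (tsub C Cb) W) < frob_norm p (tensor_mat p (tsub C' Cb) W)))
            \<longleftrightarrow> C = Cp)
    \<comment> \<open>(b)\<close>
    \<and> Cp = tadd Cb (tsum (\<lambda>j. tscale ((-1) ^ (j + 1) * real (p choose j) * (v \<bullet> s) powi (- int j))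
                  (Psym p (outer j (tensor_power j v) (contr_pow (tsub Ct Cb) s j)))) {1..p})
    \<comment> \<open>(c)\<close>
    \<and> (\<exists>!A. sym_tensor (p - 1) A \<and> contr (Psym p (outer (p - 1) A (vec_tensor v))) s = contr (tsub Ct Cb) s)
    \<and> (\<forall>A. sym_tensor (p - 1) A \<and> contr (Psym p (outer (p - 1) A (vec_tensor v))) s = contr (tsub Ct Cb) s
           \<longrightarrow> Cp = tadd Cb (Psym p (outer (p - 1) A (vec_tensor v))))
    \<comment> \<open>(d)\<close>
    \<and> (\<forall>C. sym_tensor p C \<longrightarrow>
          (tensor_mat p (tsub C Ct) W =
             tensor_mat p (tensor_mat p (tsub Cb Ct) W)
               (mat 1 - (1 / (s \<bullet> (transpose (matrix_inv W) *v (matrix_inv W *v s))))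
                   *\<^sub>R (\<chi> i j. (matrix_inv W *v s) $ i * (matrix_inv W *v s) $ j))
           \<longleftrightarrow> C = Cp))"
proof -
  obtain q where p: "p = Suc q" using assms(1) by (cases p) auto
  define u where "u = matrix_inv W *v s"
  have v_u: "transpose (matrix_inv W) *v u = v"
    unfolding u_def v_def ..
  note uv = weighted_secant_vector[OF assms(4), of s, folded u_def, unfolded v_u]
  have "u \<noteq> 0" using uv(1) assms(5) by auto
  then have vs: "v \<bullet> s \<noteq> 0" using uv(3) by (simp add: inner_commute)
  have P': "mat 1 - (1 / (s \<bullet> v)) *\<^sub>R (\<chi> i j. u $ i * u $ j) = oblique_proj u u"
    by (simp add: oblique_proj_def uv(3))
  define Cp where "Cp = secant_update p Cb Ct s v"
  have sym_Cp: "sym_tensor p Cp" and contr_Cp: "contr Cp s = contr Ct s"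
    unfolding Cp_def p by (rule sym_secant_update[OF assms(2,3)[unfolded p]], rule contr_secant_update[OF vs])
  have factor: "sym_tensor (p - 1) A \<and> contr (Psym p (outer (p - 1) A (vec_tensor v))) s = contr (tsub Ct Cb) s
      \<longleftrightarrow> A = secant_factor q Cb Ct s v" for A
    using secant_factor_unique[OF assms(2,3)[unfolded p] vs] by (simp add: p)
  show ?thesis
  proof (intro exI[of _ Cp] conjI)
    show "sym_tensor p Cp" by (rule sym_Cp)
    show "\<forall>C. (sym_tensor p C \<and> contr C s = contr Ct s \<and>
        (\<forall>C'. sym_tensor p C' \<and> contr C' s = contr Ct s \<and> C' \<noteq> C \<longrightarrow>
           frob_norm p (tensor_mat p (tsub C Cb) W) < frob_norm p (tensor_mat p (tsub C' Cb) W))) \<longleftrightarrow> C = Cp"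
      using strict_minimizer_iff[of "\<lambda>C. sym_tensor p C \<and> contr C s = contr Ct s" Cp
          "\<lambda>C. frob_norm p (tensor_mat p (tsub C Cb) W)"] sym_Cp contr_Cp
        secant_update_min_norm[OF assms(2,3)[unfolded p] _ assms(4) uv(2) vs]
      by (auto simp: Cp_def p)
    show "Cp = tadd Cb (tsum (\<lambda>j. tscale ((-1) ^ (j + 1) * real (p choose j) * (v \<bullet> s) powi (- int j))
        (Psym p (outer j (tensor_power j v) (contr_pow (tsub Ct Cb) s j)))) {1..p})"
      using secant_update_eq_sum[OF assms(2,3) vs] by (simp add: Cp_def secant_coef_def)
    show "\<exists>!A. sym_tensor (p - 1) A \<and> contr (Psym p (outer (p - 1) A (vec_tensor v))) s = contr (tsub Ct Cb) s"
      unfolding factor by simp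
    show "\<forall>A. sym_tensor (p - 1) A \<and> contr (Psym p (outer (p - 1) A (vec_tensor v))) s = contr (tsub Ct Cb) s
        \<longrightarrow> Cp = tadd Cb (Psym p (outer (p - 1) A (vec_tensor v)))"
      using factor secant_update_eq_Psym_outer[OF assms(2,3)[unfolded p] vs] by (simp add: p Cp_def)
    show "\<forall>C. sym_tensor p C \<longrightarrow>
        (tensor_mat p (tsub C Ct) W = tensor_mat p (tensor_mat p (tsub Cb Ct) W)
           (mat 1 - (1 / (s \<bullet> (transpose (matrix_inv W) *v (matrix_inv W *v s))))
               *\<^sub>R (\<chi> i j. (matrix_inv W *v s) $ i * (matrix_inv W *v s) $ j))
         \<longleftrightarrow> C = Cp)"
      unfolding u_def[symmetric] v_u P' Cp_def
      using tensor_mat_secant_update_iff[OF assms(2,3) _ assms(4) uv(1), unfolded v_u] by blast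
  qed
qed

end
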